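(* Let $c\in[0,1]$ and $\rho>\max(c,1-c)$. Let $\{G_\iota:\iota\in I\}$ be a bounded family in the space $\mathcal H(D_{\mathbb C}(c,\rho))$ of holomorphic functions on the open disc $D_{\mathbb C}(c,\rho)=\{z\in\mathbb C:|z-c|<\rho\}$ (bounded for the topology of uniform convergence on compact subsets). Let $\{\boldsymbol\epsilon_{\iota'}=(\epsilon_{\iota',N})_{N\ge1}:\iota'\in I'\}$ be a family of sequences with $\epsilon_{\iota',N}\in[0,1]$ such that $\sup_{\iota'\in I'}\epsilon_{\iota',N}\to0$ as $N\to\infty$. Then for every $\iota\in I$ and $\iota'\in I'$ the sequence of polynomials $$P_N^{\iota,\iota'}(z)=\sum_{\nu=0}^N\binom{N}{\nu}z^\nu(1-z)^{N-\nu}\,G_\iota\Big(\nu\,\frac{1-\epsilon_{\iota',N}}{N}\Big),\qquad N\ge1,$$ converges to $G_\iota$ uniformly on every compact subset of $D_{\mathbb C}(c,\rho)$, and on each compact subset of $D_{\mathbb C}(c,\rho)$ this convergence is uniform with respect to both $\iota\in I$ and $\iota'\in I'$. *)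

theory Defs
  imports "HOL-Analysis.Analysis"
begin

definition bernstein_poly :: "(complex \<Rightarrow> complex) \<Rightarrow> real \<Rightarrow> nat \<Rightarrow> complex \<Rightarrow> complex" where
  "bernstein_poly G eps N z =
     (\<Sum>\<nu>=0..N. of_nat (N choose \<nu>) * z ^ \<nu> * (1 - z) ^ (N - \<nu>)
                 * G (complex_of_real (real \<nu> * (1 - eps) / real N)))"

text \<open>A family of functions indexed by I is bounded in H(U) (topology of
  uniform convergence on compacta) iff it is uniformly bounded on each compact K in U.\<close>
definition bounded_family_on :: "'i set \<Rightarrow> ('i \<Rightarrow> complex \<Rightarrow> complex) \<Rightarrow> complex set \<Rightarrow> bool" where
  "bounded_family_on I G U \<longleftrightarrow>
     (\<forall>K. compact K \<and> K \<subseteq> U \<longrightarrow> (\<exists>B. \<forall>\<iota>\<in>I. \<forall>z\<in>K. norm (G \<iota> z) \<le> B))"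

end

theory Submission
  imports Defs "HOL-Complex_Analysis.Complex_Analysis"
begin

text \<open>
  Expand each G about the centre c. Cauchy's estimate on a circle of radius r < \<rho> bounds the
  k-th Taylor coefficient by M / r^k, with M uniform over the bounded family. Since P_N is linear
  in G, P_N - G is the series of the coefficients times B_N((w - c)^k) - (z - c)^k, where B_N is
  the Bernstein operator with shrunken nodes \<nu> (1 - \<epsilon>) / N.

  The Bernstein polynomial of (w - c)^k is the k-th moment of a sum of N independent two-point
  variables, taking the value u = (1 - \<epsilon> - c) / N with weight z and v = - c / N with weight
  1 - z. Expanding the k-th power of the sum, the N (N - 1) ... (N - k + 1) ordered index tuples
  without repetition contribute exactly ((1 - \<epsilon>) z - c)^k / N^k each, and all others at most
  2 q^k / N^k, provided the two-point moments are bounded by (q / N)^j; this holds when u and v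
  have opposite signs, i.e. c \<le> 1 - \<epsilon>. Together with |(1 - \<epsilon>) z - z| \<le> \<delta> this bounds the
  k-th term of the error series by M / r^k (2 q^k (1 - N (N - 1) ... (N - k + 1) / N^k) +
  (q + \<delta>)^k - q^k), and for q + \<delta> < r Tannery's theorem makes the sum tend to 0, uniformly
  in the family, in \<epsilon> and in z.
\<close>

section \<open>Falling factorials\<close>

definition falling_fact :: "nat \<Rightarrow> nat \<Rightarrow> nat" where
  "falling_fact n k = (\<Prod>i<k. n - i)"

lemma falling_fact_Suc_left: "falling_fact (Suc n) k = falling_fact n k + k * falling_fact n (k - 1)"
proof (cases k)
  case 0
  then show ?thesis by (simp add: falling_fact_def)
next
  case (Suc k')
  have shift: "falling_fact (Suc n) (Suc k') = Suc n * falling_fact n k'"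
    unfolding falling_fact_def prod.lessThan_Suc_shift by simp
  have last: "falling_fact n (Suc k') = falling_fact n k' * (n - k')"
    by (simp add: falling_fact_def)
  show ?thesis
  proof (cases "k' \<le> n")
    case True
    then have "Suc n = (n - k') + Suc k'" by arith
    then show ?thesis unfolding Suc shift last by (metis add_mult_distrib diff_Suc_1 mult.commute)
  next
    case False
    then have "falling_fact n k' = 0" by (auto simp: falling_fact_def)
    then show ?thesis unfolding Suc shift last by simp
  qed
qed

lemma falling_fact_le_power: "falling_fact n k \<le> n ^ k"
proof -
  have "(\<Prod>i<k. n - i) \<le> (\<Prod>i<k. n)" by (intro prod_mono) auto
  then show ?thesis by (simp add: falling_fact_def)
qed

lemma falling_fact_ratio_le_1: "real (falling_fact N k) / real N ^ k \<le> 1"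
proof -
  have "real (falling_fact N k) \<le> real N ^ k"
    using falling_fact_le_power[of N k] by (metis of_nat_le_iff of_nat_power)
  then show ?thesis
    by (cases "real N ^ k = 0") (auto simp: divide_le_eq_1)
qed

lemma norm_falling_fact_defect_le:
  fixes x :: real
  assumes "0 \<le> x"
  shows "norm (x ^ k * (1 - real (falling_fact N k) / real N ^ k)) \<le> x ^ k"
  using assms falling_fact_ratio_le_1[of N k]
  by (simp add: abs_mult mult_left_le)

lemma falling_fact_ratio_tendsto_1: "(\<lambda>N. real (falling_fact N k) / real N ^ k) \<longlonglongrightarrow> 1"
proof -
  have factor: "(\<lambda>N. real (N - i) / real N) \<longlonglongrightarrow> 1" for i
  proof -
    have "(\<lambda>N. 1 - real i / real N) \<longlonglongrightarrow> 1 - 0"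
      by (intro tendsto_intros)
    moreover have "eventually (\<lambda>N. 1 - real i / real N = real (N - i) / real N) sequentially"
      using eventually_ge_at_top[of "Suc i"]
      by eventually_elim (simp add: of_nat_diff field_simps)
    ultimately show ?thesis by (simp add: tendsto_cong)
  qed
  have "real (falling_fact N k) / real N ^ k = (\<Prod>i<k. real (N - i) / real N)" for N
    unfolding falling_fact_def prod_dividef by (simp add: of_nat_prod)
  moreover have "(\<lambda>N. \<Prod>i<k. real (N - i) / real N) \<longlonglongrightarrow> (\<Prod>i<k. 1)"
    by (intro tendsto_prod factor)
  ultimately show ?thesis by simp
qed

lemma suminf_falling_fact_defect_tendsto_0:
  fixes x :: real
  assumes "0 \<le> x" "x < 1"
  shows "(\<lambda>N. \<Sum>k. x ^ k * (1 - real (falling_fact N k) / real N ^ k)) \<longlonglongrightarrow> 0"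
proof -
  have limit: "(\<lambda>N. x ^ k * (1 - real (falling_fact N k) / real N ^ k)) \<longlonglongrightarrow> x ^ k * (1 - 1)" for k
    by (intro tendsto_intros falling_fact_ratio_tendsto_1)
  have bound: "eventually (\<lambda>(k, N). norm (x ^ k * (1 - real (falling_fact N k) / real N ^ k)) \<le> x ^ k)
      (at_top \<times>\<^sub>F sequentially)"
    using norm_falling_fact_defect_le[OF assms(1)] by (intro always_eventually) auto
  have "summable (\<lambda>k. x ^ k)"
    using assms by (intro summable_geometric) simp
  from tannerys_theorem[OF limit bound this] show ?thesis by simp
qed

section \<open>Moments of sums of two-point variables\<close>

lemma abs_add_mult_le_square:
  fixes u v q :: real
  assumes "u * v \<le> 0" "\<bar>u\<bar> \<le> q" "\<bar>v\<bar> \<le> q"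
  shows "\<bar>u + v\<bar> * q + \<bar>u * v\<bar> \<le> q * q"
proof -
  have sum: "\<bar>u + v\<bar> = \<bar>\<bar>u\<bar> - \<bar>v\<bar>\<bar>"
    using assms(1) by (cases "0 \<le> u"; cases "0 \<le> v") (auto simp: mult_le_0_iff)
  have prod: "\<bar>u * v\<bar> = \<bar>u\<bar> * \<bar>v\<bar>"
    by (rule abs_mult)
  have "0 \<le> (q - \<bar>u\<bar>) * (q + \<bar>v\<bar>)" "0 \<le> (q - \<bar>v\<bar>) * (q + \<bar>u\<bar>)"
    using assms(2,3) by simp_all
  then show ?thesis
    unfolding sum prod by (cases "\<bar>v\<bar> \<le> \<bar>u\<bar>") (simp_all add: algebra_simps)
qed

definition two_point_moment :: "'a::comm_ring_1 \<Rightarrow> 'a \<Rightarrow> 'a \<Rightarrow> nat \<Rightarrow> 'a" where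
  "two_point_moment z u v i = z * u ^ i + (1 - z) * v ^ i"

lemma norm_two_point_moment_le:
  fixes z :: "'a::real_normed_field" and u v q :: real
  assumes uv: "u * v \<le> 0" and u: "\<bar>u\<bar> \<le> q" and v: "\<bar>v\<bar> \<le> q"
    and first: "norm (two_point_moment z (of_real u) (of_real v) 1) \<le> q"
  shows "norm (two_point_moment z (of_real u) (of_real v) j) \<le> q ^ j"
proof -
  let ?m = "two_point_moment z (of_real u) (of_real v)"
  have "0 \<le> q" using u by linarith
  \<comment> \<open>u and v are the roots of X^2 - (u + v) X + u v, so the moments obey a two-term recurrence.\<close>
  have rec: "?m (Suc (Suc j)) = of_real (u + v) * ?m (Suc j) - of_real (u * v) * ?m j" for j
    by (simp add: two_point_moment_def algebra_simps)
  have "norm (?m j) \<le> q ^ j \<and> norm (?m (Suc j)) \<le> q ^ Suc j"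
  proof (induction j)
    case 0
    then show ?case using first by (simp add: two_point_moment_def)
  next
    case (Suc j)
    have "norm (?m (Suc (Suc j))) \<le> \<bar>u + v\<bar> * norm (?m (Suc j)) + \<bar>u * v\<bar> * norm (?m j)"
      unfolding rec
      by (rule order_trans[OF norm_triangle_ineq4]) (simp only: norm_mult norm_of_real order_refl)
    also have "\<dots> \<le> \<bar>u + v\<bar> * q ^ Suc j + \<bar>u * v\<bar> * q ^ j"
      using Suc.IH by (intro add_mono mult_left_mono) auto
    also have "\<dots> = (\<bar>u + v\<bar> * q + \<bar>u * v\<bar>) * q ^ j"
      by (simp add: algebra_simps)
    also have "\<dots> \<le> q ^ Suc (Suc j)"
      using mult_right_mono[OF abs_add_mult_le_square[OF uv u v], of "q ^ j"] \<open>0 \<le> q\<close>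
      by (simp add: mult.assoc)
    finally show ?case using Suc.IH by simp
  qed
  then show ?thesis ..
qed

definition bernstein_basis :: "'a::comm_ring_1 \<Rightarrow> nat \<Rightarrow> nat \<Rightarrow> 'a" where
  "bernstein_basis z n j = of_nat (n choose j) * z ^ j * (1 - z) ^ (n - j)"

lemma bernstein_basis_Suc_0: "bernstein_basis z (Suc n) 0 = (1 - z) * bernstein_basis z n 0"
  by (simp add: bernstein_basis_def)

lemma bernstein_basis_Suc_Suc:
  "bernstein_basis z (Suc n) (Suc j) = z * bernstein_basis z n j + (1 - z) * bernstein_basis z n (Suc j)"
proof (cases "j < n")
  case True
  then have "n - j = Suc (n - Suc j)" by simp
  then show ?thesis by (simp add: bernstein_basis_def algebra_simps)
next
  case False
  then show ?thesis by (cases "j = n") (simp_all add: bernstein_basis_def binomial_eq_0)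
qed

lemma sum_bernstein_basis_Suc:
  "(\<Sum>j\<le>Suc n. bernstein_basis z (Suc n) j * f j) =
     (\<Sum>j\<le>n. bernstein_basis z n j * (z * f (Suc j) + (1 - z) * f j))"
proof -
  have top: "bernstein_basis z n (Suc n) = 0" by (simp add: bernstein_basis_def binomial_eq_0)
  have "(\<Sum>j\<le>Suc n. bernstein_basis z (Suc n) j * f j) =
      bernstein_basis z (Suc n) 0 * f 0 + (\<Sum>j\<le>n. bernstein_basis z (Suc n) (Suc j) * f (Suc j))"
    by (rule sum.atMost_Suc_shift)
  also have "\<dots> = z * (\<Sum>j\<le>n. bernstein_basis z n j * f (Suc j)) +
      (1 - z) * (bernstein_basis z n 0 * f 0 + (\<Sum>j\<le>n. bernstein_basis z n (Suc j) * f (Suc j)))"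
    unfolding bernstein_basis_Suc_0 bernstein_basis_Suc_Suc distrib_right sum.distrib
    by (simp add: sum_distrib_left distrib_left mult.assoc)
  also have "bernstein_basis z n 0 * f 0 + (\<Sum>j\<le>n. bernstein_basis z n (Suc j) * f (Suc j)) =
      (\<Sum>j\<le>n. bernstein_basis z n j * f j)"
    using sum.atMost_Suc_shift[of "\<lambda>j. bernstein_basis z n j * f j" n] top by simp
  finally show ?thesis
    by (simp add: sum.distrib sum_distrib_left distrib_left ac_simps)
qed

text \<open>The k-th moment of a sum of n independent variables, each taking the value u with
  weight z and the value v with weight 1 - z.\<close>
definition bernstein_moment :: "'a::comm_ring_1 \<Rightarrow> 'a \<Rightarrow> 'a \<Rightarrow> nat \<Rightarrow> nat \<Rightarrow> 'a" where
  "bernstein_moment z u v n k =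
     (\<Sum>j\<le>n. bernstein_basis z n j * (of_nat j * u + of_nat (n - j) * v) ^ k)"

lemma bernstein_moment_0: "bernstein_moment z u v 0 k = 0 ^ k"
  by (simp add: bernstein_moment_def bernstein_basis_def)

lemma bernstein_moment_Suc:
  "bernstein_moment z u v (Suc n) k =
     (\<Sum>i\<le>k. of_nat (k choose i) * two_point_moment z u v i * bernstein_moment z u v n (k - i))"
proof -
  define s where "s j = of_nat j * u + of_nat (n - j) * v" for j
  have "bernstein_moment z u v (Suc n) k =
      (\<Sum>j\<le>n. bernstein_basis z n j * (z * (u + s j) ^ k + (1 - z) * (v + s j) ^ k))"
    unfolding bernstein_moment_def sum_bernstein_basis_Suc
  proof (intro sum.cong refl)
    fix j assume "j \<in> {..n}"
    then have "Suc n - j = Suc (n - j)" by auto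
    then show "bernstein_basis z n j * (z * (of_nat (Suc j) * u + of_nat (Suc n - Suc j) * v) ^ k +
        (1 - z) * (of_nat j * u + of_nat (Suc n - j) * v) ^ k) =
      bernstein_basis z n j * (z * (u + s j) ^ k + (1 - z) * (v + s j) ^ k)"
      by (simp add: s_def algebra_simps)
  qed
  also have "\<dots> = (\<Sum>j\<le>n. \<Sum>i\<le>k. of_nat (k choose i) * two_point_moment z u v i *
      (bernstein_basis z n j * s j ^ (k - i)))"
    unfolding binomial_ring two_point_moment_def
    by (simp add: sum_distrib_left sum.distrib[symmetric] algebra_simps)
  also have "\<dots> = (\<Sum>i\<le>k. of_nat (k choose i) * two_point_moment z u v i * bernstein_moment z u v n (k - i))"
    by (subst sum.swap) (simp add: bernstein_moment_def s_def sum_distrib_left)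
  finally show ?thesis .
qed

lemma norm_bernstein_moment_le:
  fixes z u v :: "'a::real_normed_field"
  assumes moments: "\<And>i. norm (two_point_moment z u v i) \<le> q ^ i" and "0 \<le> q"
  shows "norm (bernstein_moment z u v n k) \<le> (real n * q) ^ k"
proof (induction n arbitrary: k)
  case 0
  then show ?case by (cases k) (simp_all add: bernstein_moment_0)
next
  case (Suc n)
  have "norm (bernstein_moment z u v (Suc n) k) \<le>
      (\<Sum>i\<le>k. of_nat (k choose i) * q ^ i * (real n * q) ^ (k - i))"
    unfolding bernstein_moment_Suc
    using moments Suc.IH \<open>0 \<le> q\<close>
    by (intro order_trans[OF norm_sum] sum_mono)
       (auto simp: norm_mult intro!: mult_mono mult_nonneg_nonneg)
  also have "\<dots> = (real (Suc n) * q) ^ k"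
    by (simp add: binomial_ring algebra_simps)
  finally show ?case .
qed

lemma norm_bernstein_moment_Suc_summand_le:
  fixes z u v :: "'a::real_normed_field"
  assumes moments: "\<And>i. norm (two_point_moment z u v i) \<le> q ^ i" and "0 \<le> q"
    and IH: "\<And>j. norm (bernstein_moment z u v n j - (of_nat n * two_point_moment z u v 1) ^ j)
               \<le> 2 * q ^ j * (real n ^ j - real (falling_fact n j))"
    and "i \<le> k"
  shows "norm (two_point_moment z u v i * bernstein_moment z u v n (k - i) -
      two_point_moment z u v 1 ^ i * (of_nat n * two_point_moment z u v 1) ^ (k - i))
    \<le> 2 * q ^ k * (real n ^ (k - i) - (if i = 0 then real (falling_fact n k)
        else if i = 1 then real (falling_fact n (k - 1)) else 0))"
proof -
  let ?m = "two_point_moment z u v" and ?M = "bernstein_moment z u v n"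
  have m1: "norm (?m 1) \<le> q" using moments[of 1] by simp
  consider "i = 0" | "i = 1" | "2 \<le> i" by linarith
  then show ?thesis
  proof cases
    case 1
    then show ?thesis using IH[of k] by (simp add: two_point_moment_def)
  next
    case 2
    have "norm (?m 1 * ?M (k - 1) - ?m 1 * (of_nat n * ?m 1) ^ (k - 1))
        = norm (?m 1) * norm (?M (k - 1) - (of_nat n * ?m 1) ^ (k - 1))"
      by (simp add: norm_mult[symmetric] right_diff_distrib)
    also have "\<dots> \<le> q * (2 * q ^ (k - 1) * (real n ^ (k - 1) - real (falling_fact n (k - 1))))"
      using IH[of "k - 1"] m1 \<open>0 \<le> q\<close> by (intro mult_mono) auto
    also have "\<dots> = 2 * q ^ k * (real n ^ (k - 1) - real (falling_fact n (k - 1)))"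
      using \<open>i \<le> k\<close> 2 by (cases k) auto
    finally show ?thesis using 2 by simp
  next
    case 3
    have "norm (?m i * ?M (k - i) - ?m 1 ^ i * (of_nat n * ?m 1) ^ (k - i))
        \<le> norm (?m i) * norm (?M (k - i)) + norm (?m 1) ^ i * (real n * norm (?m 1)) ^ (k - i)"
      by (rule order_trans[OF norm_triangle_ineq4]) (simp add: norm_mult norm_power)
    also have "\<dots> \<le> q ^ i * (real n * q) ^ (k - i) + q ^ i * (real n * q) ^ (k - i)"
      using moments[of i] norm_bernstein_moment_le[OF moments \<open>0 \<le> q\<close>, of n "k - i"] m1 \<open>0 \<le> q\<close>
      by (intro add_mono mult_mono power_mono mult_left_mono) auto
    also have "\<dots> = 2 * q ^ k * real n ^ (k - i)"
      using \<open>i \<le> k\<close> by (simp add: power_mult_distrib power_add[symmetric])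
    finally show ?thesis using 3 by simp
  qed
qed

lemma norm_bernstein_moment_minus_power_le:
  fixes z u v :: "'a::real_normed_field"
  assumes moments: "\<And>i. norm (two_point_moment z u v i) \<le> q ^ i" and "0 \<le> q"
  shows "norm (bernstein_moment z u v n k - (of_nat n * two_point_moment z u v 1) ^ k)
           \<le> 2 * q ^ k * (real n ^ k - real (falling_fact n k))"
proof (induction n arbitrary: k)
  case 0
  then show ?case by (cases k) (simp_all add: bernstein_moment_0 falling_fact_def)
next
  case (Suc n)
  let ?m = "two_point_moment z u v" and ?M = "bernstein_moment z u v n"
  define h where "h i = (if i = 0 then real (falling_fact n k)
    else if i = 1 then real (falling_fact n (k - 1)) else 0)" for i :: nat
  have "(\<Sum>i\<le>k. real (k choose i) * h i) = (\<Sum>i\<le>k. (if i = 0 then real (falling_fact n k) else 0) +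
      (if i = 1 then real k * real (falling_fact n (k - 1)) else 0))"
    by (intro sum.cong) (auto simp: h_def)
  also have "\<dots> = real (falling_fact (Suc n) k)"
    unfolding falling_fact_Suc_left by (simp add: sum.distrib)
  finally have binomial_h: "(\<Sum>i\<le>k. real (k choose i) * h i) = real (falling_fact (Suc n) k)" .
  have "norm (bernstein_moment z u v (Suc n) k - (of_nat (Suc n) * ?m 1) ^ k) =
      norm (\<Sum>i\<le>k. of_nat (k choose i) * (?m i * ?M (k - i) - ?m 1 ^ i * (of_nat n * ?m 1) ^ (k - i)))"
    unfolding bernstein_moment_Suc of_nat_Suc distrib_right mult_1_left binomial_ring[of "?m 1"]
    by (simp only: right_diff_distrib sum_subtractf mult.assoc)
  also have "\<dots> \<le> (\<Sum>i\<le>k. real (k choose i) * (2 * q ^ k * (real n ^ (k - i) - h i)))"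
    using norm_bernstein_moment_Suc_summand_le[OF moments \<open>0 \<le> q\<close> Suc.IH] unfolding h_def
    by (intro order_trans[OF norm_sum] sum_mono) (auto simp only: norm_mult norm_of_nat atMost_iff intro!: mult_left_mono)
  also have "\<dots> = 2 * q ^ k * ((\<Sum>i\<le>k. real (k choose i) * real n ^ (k - i)) - (\<Sum>i\<le>k. real (k choose i) * h i))"
    by (simp add: sum_distrib_left sum_subtractf algebra_simps)
  also have "\<dots> = 2 * q ^ k * (real (Suc n) ^ k - real (falling_fact (Suc n) k))"
    unfolding binomial_h using binomial_ring[of 1 "real n" k] by (simp add: add.commute)
  finally show ?case .
qed

section \<open>Bernstein polynomials of centred powers\<close>

lemma bernstein_poly_centered_power_eq_moment:
  fixes c \<epsilon> :: real
  assumes "N \<ge> 1"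
  shows "bernstein_poly (\<lambda>w. (w - of_real c) ^ k) \<epsilon> N z =
    bernstein_moment z (of_real ((1 - \<epsilon> - c) / real N)) (of_real (- c / real N)) N k"
  unfolding bernstein_poly_def bernstein_moment_def bernstein_basis_def atLeast0AtMost
proof (intro sum.cong refl)
  fix j assume "j \<in> {..N}"
  then have "real j * ((1 - \<epsilon> - c) / real N) + real (N - j) * (- c / real N) =
      real j * (1 - \<epsilon>) / real N - c"
    using assms by (simp add: of_nat_diff field_simps)
  then have node: "of_nat j * complex_of_real ((1 - \<epsilon> - c) / real N) + of_nat (N - j) * of_real (- c / real N) =
      of_real (real j * (1 - \<epsilon>) / real N - c)"
    by (metis of_real_add of_real_mult of_real_of_nat_eq)
  show "of_nat (N choose j) * z ^ j * (1 - z) ^ (N - j) *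
      (of_real (real j * (1 - \<epsilon>) / real N) - of_real c) ^ k =
    of_nat (N choose j) * z ^ j * (1 - z) ^ (N - j) *
      (of_nat j * of_real ((1 - \<epsilon> - c) / real N) + of_nat (N - j) * of_real (- c / real N)) ^ k"
    by (simp only: node of_real_diff)
qed

lemma norm_bernstein_poly_centered_power_minus_scaled_le:
  fixes c \<epsilon> q :: real
  assumes N: "N \<ge> 1" and c: "0 \<le> c" "c \<le> 1 - \<epsilon>" and q: "1 - \<epsilon> - c \<le> q" "c \<le> q"
    and z: "norm (of_real (1 - \<epsilon>) * z - of_real c) \<le> q"
  shows "norm (bernstein_poly (\<lambda>w. (w - of_real c) ^ k) \<epsilon> N z - (of_real (1 - \<epsilon>) * z - of_real c) ^ k)
    \<le> 2 * q ^ k * (1 - real (falling_fact N k) / real N ^ k)"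
proof -
  define u where "u = (1 - \<epsilon> - c) / real N"
  define v where "v = - c / real N"
  let ?m = "two_point_moment z (of_real u) (of_real v)"
  have "real N > 0" using N by simp
  have first: "?m 1 = (of_real (1 - \<epsilon>) * z - of_real c) / of_nat N"
    using \<open>real N > 0\<close> by (simp add: two_point_moment_def u_def v_def field_simps)
  have "u * v \<le> 0" "\<bar>u\<bar> \<le> q / real N" "\<bar>v\<bar> \<le> q / real N"
    using c q \<open>real N > 0\<close> by (auto simp: u_def v_def mult_le_0_iff divide_right_mono)
  moreover have "norm (?m 1) \<le> q / real N"
    unfolding first norm_divide norm_of_nat by (intro divide_right_mono z) simp
  ultimately have "norm (?m i) \<le> (q / real N) ^ i" for i
    by (rule norm_two_point_moment_le)
  moreover have "0 \<le> q / real N" using c q by simp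
  moreover have "of_nat N * ?m 1 = of_real (1 - \<epsilon>) * z - of_real c"
    unfolding first using \<open>real N > 0\<close> by simp
  ultimately have "norm (bernstein_moment z (of_real u) (of_real v) N k - (of_real (1 - \<epsilon>) * z - of_real c) ^ k)
      \<le> 2 * (q / real N) ^ k * (real N ^ k - real (falling_fact N k))"
    using norm_bernstein_moment_minus_power_le[of z "of_real u" "of_real v" "q / real N" N k] by simp
  also have "\<dots> = 2 * q ^ k * (1 - real (falling_fact N k) / real N ^ k)"
    using \<open>real N > 0\<close> by (simp add: power_divide field_simps)
  finally show ?thesis
    unfolding bernstein_poly_centered_power_eq_moment[OF N] u_def v_def .
qed

lemma norm_power_diff_le:
  fixes x y :: "'a::real_normed_field"
  assumes "norm y \<le> q"
  shows "norm (x ^ k - y ^ k) \<le> (q + norm (x - y)) ^ k - q ^ k"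
proof (induction k)
  case 0
  then show ?case by simp
next
  case (Suc k)
  have x: "norm x \<le> q + norm (x - y)"
    using assms norm_triangle_ineq[of y "x - y"] by simp
  have "0 \<le> q + norm (x - y)"
    using assms norm_ge_zero[of y] norm_ge_zero[of "x - y"] by linarith
  have "norm (x ^ Suc k - y ^ Suc k) = norm (x * (x ^ k - y ^ k) + (x - y) * y ^ k)"
    by (simp add: algebra_simps)
  also have "\<dots> \<le> norm x * norm (x ^ k - y ^ k) + norm (x - y) * norm y ^ k"
    by (metis norm_mult norm_power norm_triangle_ineq)
  also have "\<dots> \<le> (q + norm (x - y)) * ((q + norm (x - y)) ^ k - q ^ k) + norm (x - y) * q ^ k"
    using Suc.IH x assms \<open>0 \<le> q + norm (x - y)\<close>
    by (intro add_mono mult_mono mult_left_mono power_mono) auto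
  also have "\<dots> = (q + norm (x - y)) ^ Suc k - q ^ Suc k"
    by (simp add: algebra_simps)
  finally show ?case .
qed

lemma norm_bernstein_poly_centered_power_minus_le:
  fixes c \<epsilon> q \<delta> :: real
  assumes N: "N \<ge> 1" and c: "0 \<le> c" "c \<le> 1 - \<epsilon>" "0 \<le> \<epsilon>" and q: "1 - c \<le> q" "c \<le> q"
    and z: "\<epsilon> * norm z \<le> \<delta>" "norm (z - of_real c) + \<delta> \<le> q"
  shows "norm (bernstein_poly (\<lambda>w. (w - of_real c) ^ k) \<epsilon> N z - (z - of_real c) ^ k)
    \<le> 2 * q ^ k * (1 - real (falling_fact N k) / real N ^ k) + ((q + \<delta>) ^ k - q ^ k)"
proof -
  let ?x = "of_real (1 - \<epsilon>) * z - of_real c" and ?y = "z - of_real c"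
  have shift: "norm (?x - ?y) \<le> \<delta>"
    using z c by (simp add: algebra_simps norm_mult)
  have "0 \<le> \<delta>"
    using z(1) c(3) by (meson mult_nonneg_nonneg norm_ge_zero order_trans)
  then have "norm ?y \<le> q"
    using z(2) by linarith
  have "norm ?x \<le> q"
    using norm_triangle_ineq[of ?y "?x - ?y"] shift z by simp
  have "(q + norm (?x - ?y)) ^ k \<le> (q + \<delta>) ^ k"
    using shift z(2) c(1) q(2) by (intro power_mono) auto
  then have "norm (?x ^ k - ?y ^ k) \<le> (q + \<delta>) ^ k - q ^ k"
    using norm_power_diff_le[OF \<open>norm ?y \<le> q\<close>, of ?x k] by simp
  moreover have "norm (bernstein_poly (\<lambda>w. (w - of_real c) ^ k) \<epsilon> N z - ?x ^ k)
      \<le> 2 * q ^ k * (1 - real (falling_fact N k) / real N ^ k)"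
    using c q by (intro norm_bernstein_poly_centered_power_minus_scaled_le[OF N] \<open>norm ?x \<le> q\<close>) auto
  ultimately show ?thesis
    using norm_triangle_ineq[of "bernstein_poly (\<lambda>w. (w - of_real c) ^ k) \<epsilon> N z - ?x ^ k" "?x ^ k - ?y ^ k"]
    by simp
qed

section \<open>Convergence\<close>

lemma bernstein_poly_sums_power_series:
  fixes f :: "complex \<Rightarrow> complex"
  assumes series: "\<And>w. w \<in> S \<Longrightarrow> (\<lambda>k. a k * (w - w0) ^ k) sums f w"
    and nodes: "\<And>\<nu>. \<nu> \<le> N \<Longrightarrow> complex_of_real (real \<nu> * (1 - \<epsilon>) / real N) \<in> S"
  shows "(\<lambda>k. a k * bernstein_poly (\<lambda>w. (w - w0) ^ k) \<epsilon> N z) sums bernstein_poly f \<epsilon> N z"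
proof -
  let ?b = "\<lambda>\<nu>. of_nat (N choose \<nu>) * z ^ \<nu> * (1 - z) ^ (N - \<nu>)"
    and ?node = "\<lambda>\<nu>. complex_of_real (real \<nu> * (1 - \<epsilon>) / real N)"
  have "(\<lambda>k. \<Sum>\<nu>=0..N. ?b \<nu> * (a k * (?node \<nu> - w0) ^ k)) sums (\<Sum>\<nu>=0..N. ?b \<nu> * f (?node \<nu>))"
    using series nodes by (intro sums_sum sums_mult) auto
  then show ?thesis
    unfolding bernstein_poly_def sum_distrib_left by (simp add: ac_simps)
qed

lemma norm_higher_deriv_div_fact_le:
  assumes holo: "f holomorphic_on ball \<xi> \<rho>" and r: "0 < r" "r < \<rho>"
    and M: "\<And>w. w \<in> sphere \<xi> r \<Longrightarrow> norm (f w) \<le> M"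
  shows "norm ((deriv ^^ k) f \<xi> / fact k) \<le> M / r ^ k"
proof -
  have "cball \<xi> r \<subseteq> ball \<xi> \<rho>"
    using r by auto
  then have "norm ((deriv ^^ k) f \<xi>) \<le> fact k * M / r ^ k"
    using r M by (intro Cauchy_inequality holomorphic_on_subset[OF holo] continuous_on_subset[OF
        holomorphic_on_imp_continuous_on[OF holo]]) (auto simp: dist_norm)
  then show ?thesis
    by (simp add: norm_divide field_simps)
qed

lemma bernstein_node_in_ball:
  fixes c \<rho> \<epsilon> :: real
  assumes "\<nu> \<le> N" "0 \<le> \<epsilon>" "\<epsilon> \<le> 1" "max c (1 - c) < \<rho>"
  shows "complex_of_real (real \<nu> * (1 - \<epsilon>) / real N) \<in> ball (of_real c) \<rho>"
proof -
  have "real \<nu> * (1 - \<epsilon>) \<le> real N * 1"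
    using assms by (intro mult_mono) auto
  then have "real \<nu> * (1 - \<epsilon>) / real N \<le> 1"
    by (cases "N = 0") (simp_all add: divide_le_eq mult.commute)
  moreover have "0 \<le> real \<nu> * (1 - \<epsilon>) / real N"
    using assms by simp
  ultimately have "\<bar>c - real \<nu> * (1 - \<epsilon>) / real N\<bar> < \<rho>"
    using assms(4) unfolding abs_less_iff by linarith
  then show ?thesis
    unfolding mem_ball dist_of_real dist_real_def .
qed

definition bernstein_error_majorant :: "real \<Rightarrow> real \<Rightarrow> real \<Rightarrow> real \<Rightarrow> nat \<Rightarrow> real" where
  "bernstein_error_majorant M q r \<delta> N =
     2 * M * (\<Sum>k. (q / r) ^ k * (1 - real (falling_fact N k) / real N ^ k)) +
     M * (1 / (1 - (q + \<delta>) / r) - 1 / (1 - q / r))"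

lemma bernstein_error_majorant_tendsto_0:
  assumes "0 \<le> q" "q < r" "\<delta> \<longlonglongrightarrow> 0"
  shows "(\<lambda>N. bernstein_error_majorant M q r (\<delta> N) N) \<longlonglongrightarrow> 0"
proof -
  have "0 < r" "0 \<le> q / r" "q / r < 1"
    using assms by auto
  have "(\<lambda>N. \<Sum>k. (q / r) ^ k * (1 - real (falling_fact N k) / real N ^ k)) \<longlonglongrightarrow> 0"
    using suminf_falling_fact_defect_tendsto_0 \<open>0 \<le> q / r\<close> \<open>q / r < 1\<close> .
  moreover have "(\<lambda>N. 1 / (1 - (q + \<delta> N) / r)) \<longlonglongrightarrow> 1 / (1 - (q + 0) / r)"
    using \<open>0 < r\<close> \<open>q / r < 1\<close> assms(3) by (intro tendsto_intros) auto
  ultimately have "(\<lambda>N. bernstein_error_majorant M q r (\<delta> N) N) \<longlonglongrightarrow>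
      2 * M * 0 + M * (1 / (1 - (q + 0) / r) - 1 / (1 - q / r))"
    unfolding bernstein_error_majorant_def by (intro tendsto_add tendsto_mult tendsto_diff tendsto_const)
  then show ?thesis
    by simp
qed

lemma norm_bernstein_poly_minus_le:
  fixes f :: "complex \<Rightarrow> complex" and c \<rho> r q \<delta> M \<epsilon> :: real
  assumes holo: "f holomorphic_on ball (of_real c) \<rho>"
    and M: "\<And>w. w \<in> sphere (of_real c) r \<Longrightarrow> norm (f w) \<le> M" "0 \<le> M"
    and c: "0 \<le> c" "c \<le> 1 - \<epsilon>" "0 \<le> \<epsilon>"
    and q: "1 - c \<le> q" "c \<le> q" "q + \<delta> < r" "r < \<rho>"
    and N: "N \<ge> 1"
    and z: "\<epsilon> * norm z \<le> \<delta>" "norm (z - of_real c) + \<delta> \<le> q"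
  shows "norm (bernstein_poly f \<epsilon> N z - f z) \<le> bernstein_error_majorant M q r \<delta> N"
proof -
  let ?C = "complex_of_real c" and ?ratio = "\<lambda>k. real (falling_fact N k) / real N ^ k"
  define a where "a k = (deriv ^^ k) f ?C / fact k" for k
  define x where "x = q / r"
  define y where "y = (q + \<delta>) / r"
  have "0 \<le> \<delta>"
    using z(1) c(3) by (meson mult_nonneg_nonneg norm_ge_zero order_trans)
  then have "0 < r" "0 \<le> x" "x < 1" "0 \<le> y" "y < 1"
    using c q by (auto simp: x_def y_def)
  have series: "(\<lambda>k. a k * (w - ?C) ^ k) sums f w" if "w \<in> ball ?C \<rho>" for w
    using holomorphic_power_series[OF holo that] by (simp add: a_def)
  have "z \<in> ball ?C \<rho>"
    using z(2) q \<open>0 \<le> \<delta>\<close> by (simp add: dist_norm norm_minus_commute)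
  have nodes: "complex_of_real (real \<nu> * (1 - \<epsilon>) / real N) \<in> ball ?C \<rho>" if "\<nu> \<le> N" for \<nu>
    using that c q \<open>0 \<le> \<delta>\<close> by (intro bernstein_node_in_ball) auto
  have diff: "(\<lambda>k. a k * (bernstein_poly (\<lambda>w. (w - ?C) ^ k) \<epsilon> N z - (z - ?C) ^ k))
      sums (bernstein_poly f \<epsilon> N z - f z)"
    using sums_diff[OF bernstein_poly_sums_power_series[OF series nodes] series[OF \<open>z \<in> ball ?C \<rho>\<close>]]
    by (simp add: right_diff_distrib)
  have bound: "norm (a k * (bernstein_poly (\<lambda>w. (w - ?C) ^ k) \<epsilon> N z - (z - ?C) ^ k))
      \<le> 2 * M * (x ^ k * (1 - ?ratio k)) + M * (y ^ k - x ^ k)" for k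
  proof -
    have "norm (a k * (bernstein_poly (\<lambda>w. (w - ?C) ^ k) \<epsilon> N z - (z - ?C) ^ k))
        \<le> M / r ^ k * (2 * q ^ k * (1 - ?ratio k) + ((q + \<delta>) ^ k - q ^ k))"
      unfolding norm_mult a_def using M \<open>0 < r\<close> q
      by (intro mult_mono norm_higher_deriv_div_fact_le[OF holo] norm_bernstein_poly_centered_power_minus_le
          N c q z) auto
    also have "\<dots> = 2 * M * (x ^ k * (1 - ?ratio k)) + M * (y ^ k - x ^ k)"
      using \<open>0 < r\<close> by (simp add: x_def y_def power_divide field_simps)
    finally show ?thesis .
  qed
  have "summable (\<lambda>k. x ^ k * (1 - ?ratio k))"
    using norm_falling_fact_defect_le[OF \<open>0 \<le> x\<close>] \<open>0 \<le> x\<close> \<open>x < 1\<close>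
    by (intro summable_comparison_test[OF _ summable_geometric]) auto
  then have majorant: "(\<lambda>k. 2 * M * (x ^ k * (1 - ?ratio k)) + M * (y ^ k - x ^ k)) sums
      bernstein_error_majorant M q r \<delta> N"
    unfolding bernstein_error_majorant_def x_def[symmetric] y_def[symmetric]
    using \<open>0 \<le> x\<close> \<open>x < 1\<close> \<open>0 \<le> y\<close> \<open>y < 1\<close>
    by (intro sums_add sums_mult sums_diff summable_sums geometric_sums) auto
  show ?thesis
    using norm_suminf_le[OF bound sums_summable[OF majorant]] sums_unique[OF diff] sums_unique[OF majorant]
    by simp
qed

lemma bounded_family_on_subset:
  "bounded_family_on I G U \<Longrightarrow> V \<subseteq> U \<Longrightarrow> bounded_family_on I G V"
  unfolding bounded_family_on_def by blast

lemma bernstein_poly_family_eventually_close: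
  fixes c \<rho> r q r' B M e :: real and G :: "'i \<Rightarrow> complex \<Rightarrow> complex" and \<epsilon> :: "'j \<Rightarrow> nat \<Rightarrow> real"
  assumes c: "0 \<le> c" "c < 1" and q: "1 - c \<le> q" "c \<le> q" "r' < q" "q < r" "r < \<rho>"
    and holo: "\<forall>\<iota>\<in>I. G \<iota> holomorphic_on ball (of_real c) \<rho>"
    and M: "\<forall>\<iota>\<in>I. \<forall>w\<in>sphere (of_real c) r. norm (G \<iota> w) \<le> M" "0 \<le> M"
    and K: "\<forall>z\<in>K. norm (z - of_real c) \<le> r' \<and> norm z \<le> B"
    and eps: "\<forall>\<iota>'\<in>I'. \<forall>N\<ge>1. 0 \<le> \<epsilon> \<iota>' N \<and> \<epsilon> \<iota>' N \<le> E N"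
    and E: "E \<longlonglongrightarrow> 0"
    and e: "e > 0"
  shows "\<exists>N0. \<forall>N\<ge>N0. \<forall>\<iota>\<in>I. \<forall>\<iota>'\<in>I'. \<forall>z\<in>K.
           norm (bernstein_poly (G \<iota>) (\<epsilon> \<iota>' N) N z - G \<iota> z) < e"
proof -
  have "(\<lambda>N. bernstein_error_majorant M q r (E N * B) N) \<longlonglongrightarrow> 0"
    using c q by (intro bernstein_error_majorant_tendsto_0 tendsto_mult_left_zero E) auto
  then have "eventually (\<lambda>N. bernstein_error_majorant M q r (E N * B) N < e) sequentially"
    using order_tendstoD(2) e by fastforce
  moreover have "eventually (\<lambda>N. E N * B < q - r') sequentially"
    using order_tendstoD(2)[OF tendsto_mult_left_zero[OF E], of "q - r'" B] q by simp
  moreover have "eventually (\<lambda>N. E N * B < r - q) sequentially"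
    using order_tendstoD(2)[OF tendsto_mult_left_zero[OF E], of "r - q" B] q by simp
  moreover have "eventually (\<lambda>N. E N < 1 - c) sequentially"
    using order_tendstoD(2)[OF E, of "1 - c"] c by simp
  ultimately have "eventually (\<lambda>N. bernstein_error_majorant M q r (E N * B) N < e \<and>
      E N * B < q - r' \<and> E N * B < r - q \<and> E N < 1 - c \<and> N \<ge> 1) sequentially"
    using eventually_ge_at_top[of 1] by (auto intro!: eventually_conj)
  then obtain N0 where N0: "\<And>N. N \<ge> N0 \<Longrightarrow> bernstein_error_majorant M q r (E N * B) N < e \<and>
      E N * B < q - r' \<and> E N * B < r - q \<and> E N < 1 - c \<and> N \<ge> 1"
    unfolding eventually_sequentially by blast
  show ?thesis
  proof (intro exI[of _ N0] allI impI ballI)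
    fix N \<iota> \<iota>' z assume "N0 \<le> N" "\<iota> \<in> I" "\<iota>' \<in> I'" "z \<in> K"
    then have "E N * B < q - r'" "E N * B < r - q" "E N < 1 - c" "N \<ge> 1"
      "0 \<le> \<epsilon> \<iota>' N" "\<epsilon> \<iota>' N \<le> E N" "norm (z - of_real c) \<le> r'" "norm z \<le> B"
      using N0 eps K by auto
    moreover from this have "\<epsilon> \<iota>' N * norm z \<le> E N * B"
      by (intro mult_mono) auto
    moreover have "G \<iota> holomorphic_on ball (of_real c) \<rho>" "\<And>w. w \<in> sphere (of_real c) r \<Longrightarrow> norm (G \<iota> w) \<le> M"
      using holo M \<open>\<iota> \<in> I\<close> by auto
    ultimately have "norm (bernstein_poly (G \<iota>) (\<epsilon> \<iota>' N) N z - G \<iota> z) \<le> bernstein_error_majorant M q r (E N * B) N"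
      using M(2) c q
      by (intro norm_bernstein_poly_minus_le[where \<rho> = \<rho> and c = c and r = r and q = q and \<delta> = "E N * B"]) auto
    then show "norm (bernstein_poly (G \<iota>) (\<epsilon> \<iota>' N) N z - G \<iota> z) < e"
      using N0 \<open>N0 \<le> N\<close> by fastforce
  qed
qed

lemma bernstein_poly_family_uniform_convergence_cball:
  fixes c \<rho> r' e :: real and G :: "'i \<Rightarrow> complex \<Rightarrow> complex" and \<epsilon> :: "'j \<Rightarrow> nat \<Rightarrow> real"
  assumes c: "0 \<le> c" "c < 1" and \<rho>: "max c (1 - c) < \<rho>" "r' < \<rho>"
    and holo: "\<forall>\<iota>\<in>I. G \<iota> holomorphic_on ball (of_real c) \<rho>"
    and bdd: "bounded_family_on I G (ball (of_real c) \<rho>)"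
    and eps: "\<forall>\<iota>'\<in>I'. \<forall>N\<ge>1. 0 \<le> \<epsilon> \<iota>' N \<and> \<epsilon> \<iota>' N \<le> E N"
    and E: "E \<longlonglongrightarrow> 0"
    and K: "K \<subseteq> cball (of_real c) r'"
    and e: "e > 0"
  shows "\<exists>N0. \<forall>N\<ge>N0. \<forall>\<iota>\<in>I. \<forall>\<iota>'\<in>I'. \<forall>z\<in>K.
           norm (bernstein_poly (G \<iota>) (\<epsilon> \<iota>' N) N z - G \<iota> z) < e"
proof -
  let ?C = "complex_of_real c"
  define m where "m = max r' (max c (1 - c))"
  define q where "q = (2 * m + \<rho>) / 3"
  define r where "r = (m + 2 * \<rho>) / 3"
  have "r' \<le> m" "c \<le> m" "1 - c \<le> m" "m < \<rho>"
    using \<rho> by (auto simp: m_def)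
  then have q: "1 - c \<le> q" "c \<le> q" "r' < q" "q < r" "r < \<rho>"
    unfolding q_def r_def by (auto simp: field_simps)
  have "sphere ?C r \<subseteq> ball ?C \<rho>"
    using q by auto
  then obtain M0 where M0: "\<forall>\<iota>\<in>I. \<forall>w\<in>sphere ?C r. norm (G \<iota> w) \<le> M0"
    using bdd unfolding bounded_family_on_def by (meson compact_sphere)
  have M: "\<forall>\<iota>\<in>I. \<forall>w\<in>sphere ?C r. norm (G \<iota> w) \<le> max M0 0"
    using M0 by (auto simp: le_max_iff_disj)
  have K': "\<forall>z\<in>K. norm (z - ?C) \<le> r' \<and> norm z \<le> c + r'"
  proof
    fix z assume "z \<in> K"
    then have "norm (z - ?C) \<le> r'"
      using K by (auto simp: dist_norm norm_minus_commute)
    then show "norm (z - ?C) \<le> r' \<and> norm z \<le> c + r'"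
      using norm_triangle_ineq[of ?C "z - ?C"] c by simp
  qed
  show ?thesis
    using bernstein_poly_family_eventually_close[OF c q holo M _ K' eps E e] by simp
qed

lemma compact_subset_ball_imp_cball:
  fixes K :: "'a::metric_space set"
  assumes "compact K" "K \<subseteq> ball C \<rho>"
  obtains r where "r < \<rho>" "K \<subseteq> cball C r"
proof (cases "K = {}")
  case True
  then show ?thesis using that[of "\<rho> - 1"] by simp
next
  case False
  have "continuous_on K (dist C)"
    by (intro continuous_intros)
  then obtain x where "x \<in> K" "\<forall>y\<in>K. dist C y \<le> dist C x"
    using continuous_attains_sup[OF assms(1) False] by blast
  then have "K \<subseteq> cball C (dist C x)"
    by auto
  moreover have "dist C x < \<rho>"
    using \<open>x \<in> K\<close> assms(2) by auto
  ultimately show ?thesis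
    using that by blast
qed

text \<open>The moment estimate needs c \<le> 1 - \<epsilon>, which fails for c = 1; the centre is then moved
  slightly to the left.\<close>
lemma recentre_disc:
  fixes c \<rho> :: real and K :: "complex set"
  assumes c: "0 \<le> c" "c \<le> 1" and \<rho>: "max c (1 - c) < \<rho>"
    and K: "compact K" "K \<subseteq> ball (of_real c) \<rho>"
  obtains c0 \<rho>0 r0 where "0 \<le> c0" "c0 < 1" "max c0 (1 - c0) < \<rho>0" "r0 < \<rho>0"
    "ball (complex_of_real c0) \<rho>0 \<subseteq> ball (of_real c) \<rho>" "K \<subseteq> cball (of_real c0) r0"
proof -
  obtain r' where r': "r' < \<rho>" "K \<subseteq> cball (of_real c) r'"
    using compact_subset_ball_imp_cball[OF K] .
  define \<eta> where "\<eta> = min ((\<rho> - r') / 3) (1 / 4)"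
  define s where "s = max 0 (c - (1 - \<eta>))"
  have \<eta>: "0 < \<eta>" "3 * \<eta> \<le> \<rho> - r'" "4 * \<eta> \<le> 1"
    using r' by (auto simp: \<eta>_def min_def)
  have s: "0 \<le> s" "s \<le> \<eta>" "c - s \<le> 1 - \<eta>" "0 \<le> c - s" "s = 0 \<or> c - s = 1 - \<eta>"
    using \<eta> c by (auto simp: s_def)
  have dist_centres: "dist (complex_of_real c) (of_real (c - s)) = s"
    using s by (simp add: dist_of_real dist_real_def)
  show ?thesis
  proof (rule that[of "c - s" "\<rho> - s" "r' + s"])
    show "0 \<le> c - s" "c - s < 1"
      using s \<eta> by auto
    show "r' + s < \<rho> - s"
      using s \<eta> r'(1) by linarith
    have "1 - (c - s) < \<rho> - s"
      using s(5) \<rho> \<eta> by auto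
    then show "max (c - s) (1 - (c - s)) < \<rho> - s"
      using \<rho> by simp
    show "ball (complex_of_real (c - s)) (\<rho> - s) \<subseteq> ball (of_real c) \<rho>"
    proof
      fix w assume "w \<in> ball (complex_of_real (c - s)) (\<rho> - s)"
      then show "w \<in> ball (of_real c) \<rho>"
        using dist_triangle[of "of_real c" w "of_real (c - s)"] dist_centres by auto
    qed
    show "K \<subseteq> cball (complex_of_real (c - s)) (r' + s)"
    proof
      fix w assume "w \<in> K"
      then have "dist (of_real c) w \<le> r'"
        using r'(2) by auto
      then show "w \<in> cball (complex_of_real (c - s)) (r' + s)"
        using dist_triangle[of "of_real (c - s)" w "of_real c"] dist_centres by (auto simp: dist_commute)
    qed
  qed
qed

lemma bernstein_poly_family_uniform_convergence:
  fixes c \<rho> e :: real and G :: "'i \<Rightarrow> complex \<Rightarrow> complex" and \<epsilon> :: "'j \<Rightarrow> nat \<Rightarrow> real"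
  assumes c: "0 \<le> c" "c \<le> 1" and \<rho>: "max c (1 - c) < \<rho>"
    and holo: "\<forall>\<iota>\<in>I. G \<iota> holomorphic_on ball (of_real c) \<rho>"
    and bdd: "bounded_family_on I G (ball (of_real c) \<rho>)"
    and eps: "\<forall>\<iota>'\<in>I'. \<forall>N\<ge>1. 0 \<le> \<epsilon> \<iota>' N \<and> \<epsilon> \<iota>' N \<le> E N"
    and E: "E \<longlonglongrightarrow> 0"
    and K: "compact K" "K \<subseteq> ball (of_real c) \<rho>"
    and e: "e > 0"
  shows "\<exists>N0. \<forall>N\<ge>N0. \<forall>\<iota>\<in>I. \<forall>\<iota>'\<in>I'. \<forall>z\<in>K.
           norm (bernstein_poly (G \<iota>) (\<epsilon> \<iota>' N) N z - G \<iota> z) < e"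
proof -
  obtain c0 \<rho>0 r0 where c0: "0 \<le> c0" "c0 < 1" "max c0 (1 - c0) < \<rho>0" "r0 < \<rho>0"
    and sub: "ball (complex_of_real c0) \<rho>0 \<subseteq> ball (of_real c) \<rho>" and K0: "K \<subseteq> cball (of_real c0) r0"
    using recentre_disc[OF c \<rho> K] by blast
  have "\<forall>\<iota>\<in>I. G \<iota> holomorphic_on ball (of_real c0) \<rho>0"
    using holo sub holomorphic_on_subset by blast
  then show ?thesis
    using bernstein_poly_family_uniform_convergence_cball[OF c0 _ bounded_family_on_subset[OF bdd sub]
        eps E K0 e] by blast
qed

theorem mainTheorem1:
  fixes c \<rho> :: real
    and I :: "'i set" and G :: "'i \<Rightarrow> complex \<Rightarrow> complex"
    and I' :: "'j set" and \<epsilon> :: "'j \<Rightarrow> nat \<Rightarrow> real"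
  assumes c: "0 \<le> c" "c \<le> 1"
    and rho: "\<rho> > max c (1 - c)"
    and holo: "\<forall>\<iota>\<in>I. G \<iota> holomorphic_on ball (complex_of_real c) \<rho>"
    and bdd: "bounded_family_on I G (ball (complex_of_real c) \<rho>)"
    and eps_range: "\<forall>\<iota>'\<in>I'. \<forall>N\<ge>1. \<epsilon> \<iota>' N \<in> {0..1}"
    and eps_lim: "(\<lambda>N. SUP \<iota>'\<in>I'. \<epsilon> \<iota>' N) \<longlonglongrightarrow> 0"
  shows "(\<forall>\<iota>\<in>I. \<forall>\<iota>'\<in>I'. \<forall>K. compact K \<and> K \<subseteq> ball (complex_of_real c) \<rho> \<longrightarrow>
            uniform_limit K (\<lambda>N. bernstein_poly (G \<iota>) (\<epsilon> \<iota>' N) N) (G \<iota>) sequentially)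
       \<and> (\<forall>K. compact K \<and> K \<subseteq> ball (complex_of_real c) \<rho> \<longrightarrow>
            (\<forall>e>0. \<exists>N0. \<forall>N\<ge>N0. \<forall>\<iota>\<in>I. \<forall>\<iota>'\<in>I'. \<forall>z\<in>K.
               norm (bernstein_poly (G \<iota>) (\<epsilon> \<iota>' N) N z - G \<iota> z) < e))"
proof -
  have "\<forall>\<iota>'\<in>I'. \<forall>N\<ge>1. 0 \<le> \<epsilon> \<iota>' N \<and> \<epsilon> \<iota>' N \<le> (SUP \<iota>'\<in>I'. \<epsilon> \<iota>' N)"
    using eps_range by (auto intro!: cSUP_upper bdd_aboveI2[where M = 1])
  note uniform = bernstein_poly_family_uniform_convergence[OF c rho holo bdd this eps_lim]
  have "uniform_limit K (\<lambda>N. bernstein_poly (G \<iota>) (\<epsilon> \<iota>' N) N) (G \<iota>) sequentially"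
    if "\<iota> \<in> I" "\<iota>' \<in> I'" and K: "compact K" "K \<subseteq> ball (complex_of_real c) \<rho>" for \<iota> \<iota>' K
  proof (unfold uniform_limit_sequentially_iff dist_norm, intro allI impI)
    fix e :: real assume "e > 0"
    then obtain N0 where "\<forall>N\<ge>N0. \<forall>\<iota>\<in>I. \<forall>\<iota>'\<in>I'. \<forall>z\<in>K.
        norm (bernstein_poly (G \<iota>) (\<epsilon> \<iota>' N) N z - G \<iota> z) < e"
      using uniform[OF K] by blast
    then show "\<exists>N0. \<forall>N\<ge>N0. \<forall>z\<in>K. norm (bernstein_poly (G \<iota>) (\<epsilon> \<iota>' N) N z - G \<iota> z) < e"
      using that(1,2) by blast
  qed
  then show ?thesis
    using uniform by blast
qed

end
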